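(* Let $n\ge 1$, $k\ge 1$ be integers, $V$ a complex vector space of dimension $2n+2$, $I$ a complex vector space of dimension $k$, and $(W,J)$ a complex symplectic vector space of dimension $2n+2k$. For $A\in\mathrm{Hom}(V^*\otimes I^*,W)$ let $A^t\colon W\to V\otimes I$ be the composition of $W\to W^*$, $w\mapsto J(w,\cdot)$, with the dual map $A^*\colon W^*\to V\otimes I$, and let $$\Delta_A=(\mathrm{id}_V\otimes\pi)\circ(A^t\otimes\mathrm{id}_{S^nI})\colon W\otimes S^nI\to V\otimes S^{n+1}I,$$ where $\pi\colon I\otimes S^nI\to S^{n+1}I$ is the natural multiplication map. (Both spaces have dimension $(2n+2k)\binom{k+n-1}{n}=(2n+2)\binom{k+n}{n+1}$.) Let $D(A)=\det\Delta_A$ (computed in any fixed bases). If $A$ is degenerate, i.e. there exist $0\neq v\in V^*$ and $0\neq i\in I^*$ with $A(v\otimes i)=0$, then $D(A)=0$. *)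

theory Defs
  imports Complex_Main "Jordan_Normal_Form.Determinant"
begin

text \<open>Coordinates: V = C^(2n+2) with basis indices a < 2n+2, I = C^k with basis
indices b < k, W = C^(2n+2k) with basis indices j < 2n+2k.
A map A in Hom(V* (x) I*, W) is given by its coefficients: A a b j is the j-th
coordinate of A(e_a^* (x) e_b^*).  The symplectic form J is a (2n+2k)x(2n+2k)
skew-symmetric invertible complex matrix, J(w,u) = sum w_j J_jl u_l.
S^d I has the monomial basis indexed by multi-indices of degree d.\<close>

definition multi_idx :: "nat \<Rightarrow> nat \<Rightarrow> (nat \<Rightarrow> nat) set" where
  "multi_idx k d = {\<alpha>. (\<forall>b\<ge>k. \<alpha> b = 0) \<and> sum \<alpha> {..<k} = d}"

definition is_symplectic_form :: "nat \<Rightarrow> complex mat \<Rightarrow> bool" where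
  "is_symplectic_form m J \<longleftrightarrow> J \<in> carrier_mat m m \<and> transpose_mat J = - J \<and> det J \<noteq> 0"

text \<open>J(e_j, A(e_a^* (x) e_b^*)), i.e. the (a,b)-coordinate of A^t(e_j).\<close>
definition At_coeff :: "nat \<Rightarrow> complex mat \<Rightarrow> (nat \<Rightarrow> nat \<Rightarrow> nat \<Rightarrow> complex)
    \<Rightarrow> nat \<Rightarrow> nat \<Rightarrow> nat \<Rightarrow> complex" where
  "At_coeff m J A j a b = (\<Sum>l<m. J $$ (j, l) * A a b l)"

text \<open>Matrix entry of Delta_A: row (a, beta) with |beta| = n+1 (basis of V (x) S^(n+1) I),
column (j, alpha) with |alpha| = n (basis of W (x) S^n I).
Delta_A(e_j (x) x^alpha) = sum_(a,b) J(e_j, A(a,b)) e_a (x) x^(alpha + e_b).\<close>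
definition Delta_entry :: "nat \<Rightarrow> nat \<Rightarrow> complex mat \<Rightarrow> (nat \<Rightarrow> nat \<Rightarrow> nat \<Rightarrow> complex)
    \<Rightarrow> nat \<times> (nat \<Rightarrow> nat) \<Rightarrow> nat \<times> (nat \<Rightarrow> nat) \<Rightarrow> complex" where
  "Delta_entry m k J A r c =
     (\<Sum>b<k.
        (if snd r = (snd c)(b := snd c b + 1) then At_coeff m J A (fst c) (fst r) b else 0))"

definition Delta_rows :: "nat \<Rightarrow> nat \<Rightarrow> (nat \<times> (nat \<Rightarrow> nat)) set" where
  "Delta_rows n k = {..<2*n+2} \<times> multi_idx k (n+1)"

definition Delta_cols :: "nat \<Rightarrow> nat \<Rightarrow> (nat \<times> (nat \<Rightarrow> nat)) set" where
  "Delta_cols n k = {..<2*n+2*k} \<times> multi_idx k n"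

definition Delta_mat :: "nat \<Rightarrow> nat \<Rightarrow> complex mat \<Rightarrow> (nat \<Rightarrow> nat \<Rightarrow> nat \<Rightarrow> complex)
    \<Rightarrow> (nat \<Rightarrow> nat \<times> (nat \<Rightarrow> nat)) \<Rightarrow> (nat \<Rightarrow> nat \<times> (nat \<Rightarrow> nat)) \<Rightarrow> complex mat" where
  "Delta_mat n k J A r c = (let N = card (Delta_rows n k) in
     mat N N (\<lambda>(i, i'). Delta_entry (2*n+2*k) k J A (r i) (c i')))"

definition degenerate :: "nat \<Rightarrow> nat \<Rightarrow> (nat \<Rightarrow> nat \<Rightarrow> nat \<Rightarrow> complex) \<Rightarrow> bool" where
  "degenerate n k A \<longleftrightarrow> (\<exists>v i. (\<exists>a<2*n+2. v a \<noteq> 0) \<and> (\<exists>b<k. i b \<noteq> 0) \<and>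
     (\<forall>j<2*n+2*k. (\<Sum>a<2*n+2. \<Sum>b<k. v a * i b * A a b j) = 0))"

end

theory Submission
  imports Defs
begin

text \<open>If A(v \<otimes> w) = 0 with v, w \<noteq> 0, then the linear form on V \<otimes> S^(n+1) I given by
pairing with v \<otimes> w^(n+1), i.e. e_a \<otimes> x^\<beta> \<mapsto> v_a w^\<beta>, is nonzero, and it kills the
image of \<Delta>_A: its value on \<Delta>_A(e_j \<otimes> x^\<alpha>) is w^\<alpha> J(e_j, A(v \<otimes> w)) = 0.  So \<Delta>_A is
not surjective and its determinant vanishes.\<close>

definition monomial_eval :: "nat \<Rightarrow> (nat \<Rightarrow> complex) \<Rightarrow> (nat \<Rightarrow> nat) \<Rightarrow> complex" where
  "monomial_eval k w \<beta> = (\<Prod>b<k. w b ^ \<beta> b)"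

lemma monomial_eval_increment:
  assumes "b < k"
  shows "monomial_eval k w (\<alpha>(b := \<alpha> b + 1)) = monomial_eval k w \<alpha> * w b"
proof -
  have "monomial_eval k w (\<alpha>(b := \<alpha> b + 1)) = (\<Prod>x<k. (if x = b then w b else 1) * w x ^ \<alpha> x)"
    unfolding monomial_eval_def by (rule prod.cong) auto
  also have "\<dots> = w b * monomial_eval k w \<alpha>"
    using assms by (simp add: monomial_eval_def prod.distrib prod.delta)
  finally show ?thesis by (simp add: mult.commute)
qed

lemma monomial_eval_pure_power:
  assumes "b0 < k"
  shows "monomial_eval k w (\<lambda>b. if b = b0 then d else 0) = w b0 ^ d"
proof -
  have "monomial_eval k w (\<lambda>b. if b = b0 then d else 0) = (\<Prod>b<k. if b = b0 then w b0 ^ d else 1)"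
    unfolding monomial_eval_def by (rule prod.cong) auto
  then show ?thesis using assms by (simp add: prod.delta)
qed

lemma finite_multi_idx: "finite (multi_idx k d)"
proof -
  have "multi_idx k d \<subseteq> {f. \<forall>x. (x \<in> {..<k} \<longrightarrow> f x \<in> {..d}) \<and> (x \<notin> {..<k} \<longrightarrow> f x = 0)}"
  proof (clarsimp simp: multi_idx_def)
    fix f :: "nat \<Rightarrow> nat" and x assume "\<forall>b\<ge>k. f b = 0" "x < k"
    then show "f x \<le> sum f {..<k}" by (intro member_le_sum) auto
  qed
  then show ?thesis by (rule finite_subset) (rule finite_set_of_finite_funs; simp)
qed

lemma multi_idx_increment:
  assumes "\<alpha> \<in> multi_idx k d" "b < k"
  shows "\<alpha>(b := \<alpha> b + 1) \<in> multi_idx k (d + 1)"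
proof -
  have "sum (\<alpha>(b := \<alpha> b + 1)) {..<k} = sum (\<lambda>x. \<alpha> x + (if x = b then 1 else 0)) {..<k}"
    by (rule sum.cong) auto
  also have "\<dots> = d + 1" using assms by (simp add: sum.distrib multi_idx_def)
  finally show ?thesis using assms by (auto simp: multi_idx_def)
qed

lemma pure_power_in_multi_idx:
  assumes "b0 < k"
  shows "(\<lambda>b. if b = b0 then d else 0) \<in> multi_idx k d"
  using assms by (auto simp: multi_idx_def sum.delta)

lemma det_eq_0_if_left_null_vector:
  fixes M :: "'a::field mat"
  assumes M: "M \<in> carrier_mat N N"
    and nonzero: "i < N" "y i \<noteq> 0"
    and null: "\<And>j. j < N \<Longrightarrow> (\<Sum>i<N. y i * M $$ (i, j)) = 0"
  shows "det M = 0"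
proof -
  let ?y = "vec N y"
  have "transpose_mat M *\<^sub>v ?y = 0\<^sub>v N"
  proof (rule eq_vecI)
    fix j assume "j < dim_vec (0\<^sub>v N :: 'a vec)"
    then have "j < N" by simp
    then have "(transpose_mat M *\<^sub>v ?y) $ j = (\<Sum>i<N. y i * M $$ (i, j))"
      using M by (auto simp: scalar_prod_def lessThan_atLeast0 mult.commute intro!: sum.cong)
    then show "(transpose_mat M *\<^sub>v ?y) $ j = 0\<^sub>v N $ j"
      using null \<open>j < N\<close> by simp
  qed (use M in simp)
  moreover have "?y \<noteq> 0\<^sub>v N"
    using nonzero by (metis index_vec index_zero_vec(1))
  moreover have "transpose_mat M \<in> carrier_mat N N" and "?y \<in> carrier_vec N"
    using M by auto
  ultimately have "det (transpose_mat M) = 0"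
    using det_0_iff_vec_prod_zero_field by blast
  then show ?thesis
    using det_transpose[OF M] by simp
qed

lemma Delta_entry_pairing:
  assumes "\<alpha> \<in> multi_idx k n"
  shows "(\<Sum>y\<in>Delta_rows n k. v (fst y) * monomial_eval k w (snd y) * Delta_entry m k J A y (j, \<alpha>))
    = monomial_eval k w \<alpha> * (\<Sum>l<m. J $$ (j, l) * (\<Sum>a<2*n+2. \<Sum>b<k. v a * w b * A a b l))"
  (is "?lhs = _")
proof -
  have "?lhs = (\<Sum>y\<in>Delta_rows n k. \<Sum>b<k.
      if snd y = \<alpha>(b := \<alpha> b + 1)
      then v (fst y) * monomial_eval k w (snd y) * At_coeff m J A j (fst y) b else 0)"
    unfolding Delta_entry_def sum_distrib_left by (intro sum.cong refl) simp
  also have "\<dots> = (\<Sum>b<k. \<Sum>y\<in>Delta_rows n k.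
      if snd y = \<alpha>(b := \<alpha> b + 1)
      then v (fst y) * monomial_eval k w (snd y) * At_coeff m J A j (fst y) b else 0)"
    by (rule sum.swap)
  also have "\<dots> = (\<Sum>b<k. \<Sum>a<2*n+2. \<Sum>\<beta>\<in>multi_idx k (n+1).
      if \<beta> = \<alpha>(b := \<alpha> b + 1) then v a * monomial_eval k w \<beta> * At_coeff m J A j a b else 0)"
    unfolding Delta_rows_def sum.cartesian_product by (simp only: split_def fst_conv snd_conv)
  also have "\<dots> = (\<Sum>b<k. \<Sum>a<2*n+2. v a * (monomial_eval k w \<alpha> * w b) * At_coeff m J A j a b)"
  proof (intro sum.cong refl)
    fix b a assume "b \<in> {..<k}"
    then have "b < k" "\<alpha>(b := \<alpha> b + 1) \<in> multi_idx k (n+1)"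
      using multi_idx_increment[OF assms] by auto
    then show "(\<Sum>\<beta>\<in>multi_idx k (n+1).
        if \<beta> = \<alpha>(b := \<alpha> b + 1) then v a * monomial_eval k w \<beta> * At_coeff m J A j a b else 0)
      = v a * (monomial_eval k w \<alpha> * w b) * At_coeff m J A j a b"
      using monomial_eval_increment[of b k w \<alpha>] by (simp add: sum.delta' finite_multi_idx)
  qed
  also have "\<dots> = (\<Sum>b<k. \<Sum>a<2*n+2. \<Sum>l<m.
      monomial_eval k w \<alpha> * (J $$ (j, l) * (v a * w b * A a b l)))"
    unfolding At_coeff_def sum_distrib_left by (intro sum.cong refl) (simp add: mult_ac)
  also have "\<dots> = (\<Sum>b<k. \<Sum>l<m. \<Sum>a<2*n+2.
      monomial_eval k w \<alpha> * (J $$ (j, l) * (v a * w b * A a b l)))"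
    by (rule sum.cong[OF refl], rule sum.swap)
  also have "\<dots> = (\<Sum>l<m. \<Sum>b<k. \<Sum>a<2*n+2.
      monomial_eval k w \<alpha> * (J $$ (j, l) * (v a * w b * A a b l)))"
    by (rule sum.swap)
  also have "\<dots> = (\<Sum>l<m. \<Sum>a<2*n+2. \<Sum>b<k.
      monomial_eval k w \<alpha> * (J $$ (j, l) * (v a * w b * A a b l)))"
    by (rule sum.cong[OF refl], rule sum.swap)
  also have "\<dots> = monomial_eval k w \<alpha> * (\<Sum>l<m. J $$ (j, l) * (\<Sum>a<2*n+2. \<Sum>b<k. v a * w b * A a b l))"
    by (simp only: sum_distrib_left)
  finally show ?thesis .
qed

lemma Delta_mat_left_null_vector:
  assumes r: "bij_betw r {..<card (Delta_rows n k)} (Delta_rows n k)"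
    and c: "bij_betw c {..<card (Delta_rows n k)} (Delta_cols n k)"
    and vw: "\<forall>l<2*n+2*k. (\<Sum>a<2*n+2. \<Sum>b<k. v a * w b * A a b l) = 0"
    and j: "j < card (Delta_rows n k)"
  shows "(\<Sum>i<card (Delta_rows n k).
      v (fst (r i)) * monomial_eval k w (snd (r i)) * Delta_mat n k J A r c $$ (i, j)) = 0"
proof -
  let ?N = "card (Delta_rows n k)"
  have "c j \<in> Delta_cols n k"
    using c j by (auto dest: bij_betwE)
  then obtain j' \<alpha> where cj: "c j = (j', \<alpha>)" "j' < 2*n+2*k" "\<alpha> \<in> multi_idx k n"
    unfolding Delta_cols_def by auto
  have "(\<Sum>i<?N. v (fst (r i)) * monomial_eval k w (snd (r i)) * Delta_mat n k J A r c $$ (i, j))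
      = (\<Sum>i<?N. v (fst (r i)) * monomial_eval k w (snd (r i))
          * Delta_entry (2*n+2*k) k J A (r i) (c j))"
    using j by (simp add: Delta_mat_def Let_def)
  also have "\<dots> = (\<Sum>y\<in>Delta_rows n k.
      v (fst y) * monomial_eval k w (snd y) * Delta_entry (2*n+2*k) k J A y (c j))"
    using sum.reindex_bij_betw[OF r] .
  also have "\<dots> = 0"
    using Delta_entry_pairing[OF cj(3)] vw cj(1,2) by simp
  finally show ?thesis .
qed

theorem mainTheorem2:
  fixes n k :: nat and J :: "complex mat" and A :: "nat \<Rightarrow> nat \<Rightarrow> nat \<Rightarrow> complex"
    and r c :: "nat \<Rightarrow> nat \<times> (nat \<Rightarrow> nat)"
  assumes "n \<ge> 1" and "k \<ge> 1"
    and "is_symplectic_form (2*n+2*k) J"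
    and "bij_betw r {..<card (Delta_rows n k)} (Delta_rows n k)"
    and "bij_betw c {..<card (Delta_rows n k)} (Delta_cols n k)"
    and "degenerate n k A"
  shows "det (Delta_mat n k J A r c) = 0"
proof -
  let ?N = "card (Delta_rows n k)"
  obtain v w a0 b0 where a0: "a0 < 2*n+2" "v a0 \<noteq> 0" and b0: "b0 < k" "w b0 \<noteq> 0"
    and vw: "\<forall>j<2*n+2*k. (\<Sum>a<2*n+2. \<Sum>b<k. v a * w b * A a b j) = 0"
    using assms(6) unfolding degenerate_def by blast
  let ?\<beta>0 = "\<lambda>b. if b = b0 then n + 1 else 0"
  have "(a0, ?\<beta>0) \<in> Delta_rows n k"
    unfolding Delta_rows_def using a0(1) pure_power_in_multi_idx[OF b0(1)] by blast
  then obtain i0 where i0: "i0 < ?N" "r i0 = (a0, ?\<beta>0)"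
    using bij_betw_imp_surj_on[OF assms(4)] by (force simp del: fun_upd_apply)
  show ?thesis
  proof (rule det_eq_0_if_left_null_vector
      [where y = "\<lambda>i. v (fst (r i)) * monomial_eval k w (snd (r i))", OF _ i0(1)])
    show "Delta_mat n k J A r c \<in> carrier_mat ?N ?N"
      by (simp add: Delta_mat_def Let_def)
    show "v (fst (r i0)) * monomial_eval k w (snd (r i0)) \<noteq> 0"
      using i0(2) a0 b0 by (simp add: monomial_eval_pure_power)
  qed (rule Delta_mat_left_null_vector[OF assms(4,5) vw])
qed

end
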